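(* Fix a constant $\Delta$. Let $\mathcal{G}$ be one of the following graph families: (i) all graphs of maximum degree at most $\Delta$; (ii) all trees of maximum degree at most $\Delta$; (iii) all cycles (in which case $\Delta=2$). Let $d(n)=n$ if $\Delta\le 2$ and $d(n)=\log n$ otherwise. Then there is no LCL problem $\Pi$ defined on $\mathcal{G}$ whose mending radius is between $\omega(1)$ and $o(d(n))$; that is, if $\Pi$ is $T$-mendable on $\mathcal{G}$ for some function $T$ with $T(n)=o(d(n))$, then $\Pi$ is $T'$-mendable on $\mathcal{G}$ for some constant function $T'$.
   Context: A locally verifiable problem $\Pi$ on a graph family $\mathcal{G}$ is given by a set $\Sigma$ of input labels, a set $\Gamma$ of output labels and a verifier $\psi$ with verification radius $r\in\mathbb{N}$: for a graph $G=(V,E)\in\mathcal{G}$ with input labeling $\sigma:V\to\Sigma$, an output labeling $\lambda:V\to\Gamma$ and a node $v$, $\psi(G,\lambda,v)\in\{\text{happy},\text{unhappy}\}$ depends only on the radius-$r$ neighborhood of $v$ (structure, inputs and outputs, up to isomorphism). $\lambda$ is a solution if $\psi$ is happy at every node. $\Pi$ is an LCL problem if $\Sigma,\Gamma$ are finite and all graphs in $\mathcal{G}$ have maximum degree bounded by a constant. Partial labelings are maps $\lambda:V\to\Gamma\cup\{\bot\}$; the relaxed verifier $\psi^*$ is happy at $v$ if some node within distance $r$ of $v$ has label $\bot$, and otherwise $\psi^*(G,\lambda,v)=\psi(G,\lambda',v)$ for any $\lambda':V\to\Gamma$ agreeing with $\lambda$ on the radius-$r$ neighborhood of $v$; $\psi^*$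 accepts $\lambda$ if it is happy at all nodes. Given $\lambda$ accepted by $\psi^*$ and a node $v$, a $t$-mend of $\lambda$ at $v$ is a partial labeling $\mu$ such that $\psi^*$ accepts $\mu$, $\mu(v)\neq\bot$, $\mu(u)=\bot$ implies $\lambda(u)=\bot$, and $\mu(u)\neq\lambda(u)$ implies $u$ is within distance $t$ of $v$. A verifier $\psi$ is $T$-mendable ($T:\mathbb{N}\to\mathbb{N}$) if for every $G\in\mathcal{G}$ with $n$ nodes, every partial labeling $\lambda$ accepted by $\psi^*$ and every node $v$, a $T(n)$-mend of $\lambda$ at $v$ exists. $\Pi$ is $T$-mendable if for some $r$ there is a radius-$r$ verifier for $\Pi$ (accepting exactly the solutions of $\Pi$) that is $T$-mendable. *)

theory Defs
  imports Main "HOL-Library.Landau_Symbols"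
begin

type_synonym graph = "nat set \<times> (nat \<Rightarrow> nat \<Rightarrow> bool)"

definition verts :: "graph \<Rightarrow> nat set" where "verts G = fst G"
definition adj :: "graph \<Rightarrow> nat \<Rightarrow> nat \<Rightarrow> bool" where "adj G = snd G"

definition wf_graph :: "graph \<Rightarrow> bool" where
  "wf_graph G \<longleftrightarrow> finite (verts G)
     \<and> (\<forall>u v. adj G u v \<longrightarrow> u \<in> verts G \<and> v \<in> verts G)
     \<and> (\<forall>u v. adj G u v \<longrightarrow> adj G v u)
     \<and> (\<forall>u. \<not> adj G u u)"

definition edge_rel :: "graph \<Rightarrow> (nat \<times> nat) set" where
  "edge_rel G = {(u, v). adj G u v}"

definition dist_le :: "graph \<Rightarrow> nat \<Rightarrow> nat \<Rightarrow> nat \<Rightarrow> bool" where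
  "dist_le G t u v \<longleftrightarrow> u \<in> verts G \<and> v \<in> verts G \<and> (\<exists>k\<le>t. (u, v) \<in> edge_rel G ^^ k)"

definition nball :: "graph \<Rightarrow> nat \<Rightarrow> nat \<Rightarrow> nat set" where
  "nball G v r = {u \<in> verts G. dist_le G r v u}"

definition degree :: "graph \<Rightarrow> nat \<Rightarrow> nat" where
  "degree G v = card {u. adj G v u}"

definition max_degree_le :: "graph \<Rightarrow> nat \<Rightarrow> bool" where
  "max_degree_le G \<Delta> \<longleftrightarrow> (\<forall>v\<in>verts G. degree G v \<le> \<Delta>)"

definition connected_graph :: "graph \<Rightarrow> bool" where
  "connected_graph G \<longleftrightarrow> (\<forall>u\<in>verts G. \<forall>v\<in>verts G. (u, v) \<in> (edge_rel G)\<^sup>*)"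

definition is_cycle_in :: "graph \<Rightarrow> nat list \<Rightarrow> bool" where
  "is_cycle_in G xs \<longleftrightarrow> length xs \<ge> 3 \<and> distinct xs \<and> set xs \<subseteq> verts G
     \<and> (\<forall>i<length xs. adj G (xs ! i) (xs ! ((i + 1) mod length xs)))"

definition is_tree :: "graph \<Rightarrow> bool" where
  "is_tree G \<longleftrightarrow> verts G \<noteq> {} \<and> connected_graph G \<and> \<not> (\<exists>xs. is_cycle_in G xs)"

definition is_cycle_graph :: "graph \<Rightarrow> bool" where
  "is_cycle_graph G \<longleftrightarrow> connected_graph G \<and> card (verts G) \<ge> 3
     \<and> (\<forall>v\<in>verts G. degree G v = 2)"

definition bdeg_graphs :: "nat \<Rightarrow> graph set" where
  "bdeg_graphs \<Delta> = {G. wf_graph G \<and> max_degree_le G \<Delta>}"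

definition bdeg_trees :: "nat \<Rightarrow> graph set" where
  "bdeg_trees \<Delta> = {G. wf_graph G \<and> max_degree_le G \<Delta> \<and> is_tree G}"

definition cycle_graphs :: "graph set" where
  "cycle_graphs = {G. wf_graph G \<and> is_cycle_graph G}"

(* A verifier: given graph, input labeling, output labeling, node, decides happiness. *)
type_synonym ('i, 'o) verifier = "graph \<Rightarrow> (nat \<Rightarrow> 'i) \<Rightarrow> (nat \<Rightarrow> 'o) \<Rightarrow> nat \<Rightarrow> bool"

(* \<psi> has verification radius r on family F: its value at v depends only on the
   radius-r neighbourhood of v (structure, inputs, outputs) up to isomorphism *)
definition local_verifier :: "graph set \<Rightarrow> ('i, 'o) verifier \<Rightarrow> nat \<Rightarrow> bool" where
  "local_verifier F \<psi> r \<longleftrightarrow>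
    (\<forall>G G' \<sigma> \<sigma>' L L' v v' f.
       G \<in> F \<and> G' \<in> F \<and> v \<in> verts G \<and> v' \<in> verts G'
       \<and> bij_betw f (nball G v r) (nball G' v' r) \<and> f v = v'
       \<and> (\<forall>x\<in>nball G v r. \<forall>y\<in>nball G v r. adj G x y \<longleftrightarrow> adj G' (f x) (f y))
       \<and> (\<forall>x\<in>nball G v r. \<sigma>' (f x) = \<sigma> x \<and> L' (f x) = L x)
       \<longrightarrow> \<psi> G \<sigma> L v = \<psi> G' \<sigma>' L' v')"

definition is_solution :: "('i, 'o) verifier \<Rightarrow> graph \<Rightarrow> (nat \<Rightarrow> 'i) \<Rightarrow> (nat \<Rightarrow> 'o) \<Rightarrow> bool" where
  "is_solution \<psi> G \<sigma> L \<longleftrightarrow> (\<forall>v\<in>verts G. \<psi> G \<sigma> L v)"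

(* Partial labelings: None plays the role of \<bottom>.  Relaxed verifier \<psi>*. *)
definition relaxed :: "('i, 'o) verifier \<Rightarrow> nat \<Rightarrow> graph \<Rightarrow> (nat \<Rightarrow> 'i) \<Rightarrow> (nat \<Rightarrow> 'o option) \<Rightarrow> nat \<Rightarrow> bool" where
  "relaxed \<psi> r G \<sigma> L v \<longleftrightarrow>
     (\<exists>u\<in>nball G v r. L u = None)
     \<or> (\<forall>L'. (\<forall>u\<in>nball G v r. L u = Some (L' u)) \<longrightarrow> \<psi> G \<sigma> L' v)"

definition relaxed_accepts :: "('i, 'o) verifier \<Rightarrow> nat \<Rightarrow> graph \<Rightarrow> (nat \<Rightarrow> 'i) \<Rightarrow> (nat \<Rightarrow> 'o option) \<Rightarrow> bool" where
  "relaxed_accepts \<psi> r G \<sigma> L \<longleftrightarrow> (\<forall>v\<in>verts G. relaxed \<psi> r G \<sigma> L v)"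

definition is_mend :: "('i, 'o) verifier \<Rightarrow> nat \<Rightarrow> graph \<Rightarrow> (nat \<Rightarrow> 'i)
     \<Rightarrow> (nat \<Rightarrow> 'o option) \<Rightarrow> nat \<Rightarrow> nat \<Rightarrow> (nat \<Rightarrow> 'o option) \<Rightarrow> bool" where
  "is_mend \<psi> r G \<sigma> L v t \<mu> \<longleftrightarrow>
     relaxed_accepts \<psi> r G \<sigma> \<mu> \<and> \<mu> v \<noteq> None
     \<and> (\<forall>u\<in>verts G. \<mu> u = None \<longrightarrow> L u = None)
     \<and> (\<forall>u\<in>verts G. \<mu> u \<noteq> L u \<longrightarrow> dist_le G t v u)"

definition verifier_mendable :: "graph set \<Rightarrow> ('i, 'o) verifier \<Rightarrow> nat \<Rightarrow> (nat \<Rightarrow> nat) \<Rightarrow> bool" where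
  "verifier_mendable F \<psi> r T \<longleftrightarrow>
     (\<forall>G\<in>F. \<forall>\<sigma> L. relaxed_accepts \<psi> r G \<sigma> L \<longrightarrow>
        (\<forall>v\<in>verts G. \<exists>\<mu>. is_mend \<psi> r G \<sigma> L v (T (card (verts G))) \<mu>))"

(* The problem \<Pi> whose solutions are those accepted by \<psi>0 (with radius r0) is T-mendable
   on F: some verifier of some radius r accepting exactly the solutions of \<Pi> is T-mendable. *)
definition problem_mendable :: "graph set \<Rightarrow> ('i, 'o) verifier \<Rightarrow> (nat \<Rightarrow> nat) \<Rightarrow> bool" where
  "problem_mendable F \<psi>0 T \<longleftrightarrow>
     (\<exists>r \<psi>. local_verifier F \<psi> r
        \<and> (\<forall>G\<in>F. \<forall>\<sigma> L. is_solution \<psi> G \<sigma> L \<longleftrightarrow> is_solution \<psi>0 G \<sigma> L)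
        \<and> verifier_mendable F \<psi> r T)"

end

(*
  Choose R so large that T(N) + 3r <= R for N = ball_bound Delta R + 1, one more than the
  largest possible size of a radius-R ball. A graph of the family with at most N - 1 nodes is
  mended within the constant max T(0..N). Otherwise some radius-R ball around v misses a node,
  and the family contains a graph H with exactly N nodes that has the same radius-R ball around
  v: pad the ball with isolated nodes, hang a path from a boundary node (trees), or close the
  arc of a cycle by a path. A partial labeling is cut down to the ball, mended in H within
  radius T(N), and the mend is copied back; as T(N) + 3r <= R, every verifier view that matters
  is the same in G and in H.
*)

theory Submission
  imports Defs
begin

section \<open>Distances, balls and spheres\<close>

abbreviation nbrs :: "graph \<Rightarrow> nat \<Rightarrow> nat set" where
  "nbrs G x \<equiv> {u. adj G x u}"

lemma edge_rel_iff [simp]: "(u, v) \<in> edge_rel G \<longleftrightarrow> adj G u v"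
  by (simp add: edge_rel_def)

lemma wf_graph_adjD: "wf_graph G \<Longrightarrow> adj G u v \<Longrightarrow> u \<in> verts G \<and> v \<in> verts G"
  by (simp add: wf_graph_def)

lemma wf_graph_adj_sym: "wf_graph G \<Longrightarrow> adj G u v \<Longrightarrow> adj G v u"
  by (simp add: wf_graph_def)

lemma wf_graph_adj_irrefl: "wf_graph G \<Longrightarrow> \<not> adj G u u"
  by (simp add: wf_graph_def)

lemma wf_graph_finite: "wf_graph G \<Longrightarrow> finite (verts G)"
  by (simp add: wf_graph_def)

lemma finite_nbrs: "wf_graph G \<Longrightarrow> finite (nbrs G x)"
  by (rule finite_subset[of _ "verts G"]) (auto dest: wf_graph_adjD simp: wf_graph_finite)

lemma relpow_edge_rel_sym:
  assumes "wf_graph G"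
  shows "(u, v) \<in> edge_rel G ^^ k \<Longrightarrow> (v, u) \<in> edge_rel G ^^ k"
proof (induction k arbitrary: v)
  case 0
  then show ?case by simp
next
  case (Suc k)
  then obtain y where "(u, y) \<in> edge_rel G ^^ k" "adj G y v"
    by (auto elim: relpow_Suc_E)
  then show ?case
    using Suc.IH assms wf_graph_adj_sym by (metis edge_rel_iff relpow_Suc_I2)
qed

lemma dist_le_mono: "dist_le G t u v \<Longrightarrow> t \<le> t' \<Longrightarrow> dist_le G t' u v"
  unfolding dist_le_def by (meson order_trans)

lemma dist_le_refl: "u \<in> verts G \<Longrightarrow> dist_le G t u u"
  unfolding dist_le_def by (auto intro: exI[of _ 0])

lemma dist_le_0_iff: "dist_le G 0 u v \<longleftrightarrow> u \<in> verts G \<and> v = u"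
  unfolding dist_le_def by auto

lemma dist_le_sym: "wf_graph G \<Longrightarrow> dist_le G t u v \<Longrightarrow> dist_le G t v u"
  unfolding dist_le_def using relpow_edge_rel_sym by blast

lemma dist_le_trans: "dist_le G a u x \<Longrightarrow> dist_le G b x y \<Longrightarrow> dist_le G (a + b) u y"
  unfolding dist_le_def
proof (elim conjE exE)
  fix k l assume "u \<in> verts G" "k \<le> a" "(u, x) \<in> edge_rel G ^^ k"
    "y \<in> verts G" "l \<le> b" "(x, y) \<in> edge_rel G ^^ l"
  then show "u \<in> verts G \<and> y \<in> verts G \<and> (\<exists>k\<le>a + b. (u, y) \<in> edge_rel G ^^ k)"
    by (intro conjI exI[of _ "k + l"]) (auto simp: relpow_add)
qed

lemma dist_le_adj: "wf_graph G \<Longrightarrow> dist_le G t u x \<Longrightarrow> adj G x y \<Longrightarrow> dist_le G (Suc t) u y"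
  unfolding dist_le_def by (metis Suc_le_mono edge_rel_iff relpow_Suc_I wf_graph_adjD)

lemma dist_le_SucE:
  assumes wf: "wf_graph G" and "dist_le G (Suc t) u y" and "\<not> dist_le G t u y"
  obtains x where "dist_le G t u x" "adj G x y"
proof -
  obtain k where "u \<in> verts G" "k \<le> Suc t" "(u, y) \<in> edge_rel G ^^ k"
    using assms(2) unfolding dist_le_def by blast
  moreover have "k = Suc t"
    using assms(2,3) calculation unfolding dist_le_def by (metis le_Suc_eq)
  ultimately obtain x where x: "(u, x) \<in> edge_rel G ^^ t" "adj G x y" "u \<in> verts G"
    by (auto elim: relpow_Suc_E)
  have "x \<in> verts G"
  proof (cases t)
    case 0
    then show ?thesis using x by simp
  next
    case (Suc s)
    then show ?thesis using x wf_graph_adjD[OF wf] by (auto elim: relpow_Suc_E)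
  qed
  with x show ?thesis using that unfolding dist_le_def by blast
qed

lemma max_degree_leD: "max_degree_le G \<Delta> \<Longrightarrow> x \<in> verts G \<Longrightarrow> card (nbrs G x) \<le> \<Delta>"
  by (simp add: max_degree_le_def degree_def)

lemma mem_nball_iff: "u \<in> nball G v r \<longleftrightarrow> dist_le G r v u"
  unfolding nball_def dist_le_def by auto

lemma nball_subset_verts: "nball G v r \<subseteq> verts G"
  unfolding nball_def by auto

lemma finite_nball: "wf_graph G \<Longrightarrow> finite (nball G v r)"
  by (rule finite_subset[OF nball_subset_verts wf_graph_finite])

lemma center_in_nball: "v \<in> verts G \<Longrightarrow> v \<in> nball G v r"
  by (simp add: mem_nball_iff dist_le_refl)

lemma nball_0: "v \<in> verts G \<Longrightarrow> nball G v 0 = {v}"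
  by (auto simp: mem_nball_iff dist_le_0_iff)

lemma nball_mono: "r \<le> r' \<Longrightarrow> nball G v r \<subseteq> nball G v r'"
  by (auto simp: mem_nball_iff intro: dist_le_mono)

lemma nball_adj: "wf_graph G \<Longrightarrow> x \<in> nball G v r \<Longrightarrow> adj G x y \<Longrightarrow> y \<in> nball G v (Suc r)"
  by (simp add: mem_nball_iff dist_le_adj)

lemma nball_trans: "x \<in> nball G v a \<Longrightarrow> u \<in> nball G x b \<Longrightarrow> u \<in> nball G v (a + b)"
  by (simp add: mem_nball_iff dist_le_trans)

definition sphere :: "graph \<Rightarrow> nat \<Rightarrow> nat \<Rightarrow> nat set" where
  "sphere G v k = (if k = 0 then nball G v 0 else nball G v k - nball G v (k - 1))"

lemma sphere_Suc: "sphere G v (Suc k) = nball G v (Suc k) - nball G v k"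
  by (simp add: sphere_def)

lemma sphere_subset_nball: "sphere G v k \<subseteq> nball G v k"
  by (auto simp: sphere_def)

lemma finite_sphere: "wf_graph G \<Longrightarrow> finite (sphere G v k)"
  using finite_subset[OF sphere_subset_nball finite_nball] .

lemma nball_Suc_eq: "nball G v (Suc k) = nball G v k \<union> sphere G v (Suc k)"
  using nball_mono[of k "Suc k" G v] by (auto simp: sphere_Suc)

lemma sphere_SucE:
  assumes wf: "wf_graph G" and u: "u \<in> sphere G v (Suc k)"
  obtains x where "x \<in> sphere G v k" "adj G x u"
proof -
  have u1: "dist_le G (Suc k) v u" "\<not> dist_le G k v u"
    using u by (auto simp: sphere_Suc mem_nball_iff)
  obtain x where x: "dist_le G k v x" "adj G x u"
    using dist_le_SucE[OF wf u1] .
  have "x \<in> sphere G v k"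
  proof (cases k)
    case 0
    then show ?thesis using x by (simp add: sphere_def mem_nball_iff)
  next
    case (Suc j)
    have "\<not> dist_le G j v x"
      using u1 Suc dist_le_adj[OF wf _ x(2)] by blast
    then show ?thesis using x Suc by (simp add: sphere_def mem_nball_iff)
  qed
  with x that show ?thesis by blast
qed

text \<open>A vertex of a sphere of positive radius spends one edge on its predecessor.\<close>

lemma card_sphere_Suc_le:
  assumes wf: "wf_graph G" and md: "max_degree_le G \<Delta>"
  shows "card (sphere G v (Suc k)) \<le> card (sphere G v k) * (if k = 0 then \<Delta> else \<Delta> - 1)"
proof -
  define out where "out x = nbrs G x - nball G v k" for x
  have out_card: "card (out x) \<le> (if k = 0 then \<Delta> else \<Delta> - 1)" if x: "x \<in> sphere G v k" for x
  proof -
    have "card (nbrs G x) \<le> \<Delta>"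
      using md x sphere_subset_nball nball_subset_verts by (blast intro: max_degree_leD)
    moreover have "card (out x) \<le> card (nbrs G x)"
      unfolding out_def by (rule card_mono[OF finite_nbrs[OF wf]]) auto
    moreover have "card (out x) \<le> card (nbrs G x) - 1" if "k = Suc j" for j
    proof -
      obtain w where w: "w \<in> sphere G v j" "adj G w x"
        using sphere_SucE[OF wf] x \<open>k = Suc j\<close> by blast
      have "w \<in> nbrs G x" "w \<in> nball G v k"
        using w wf_graph_adj_sym[OF wf] sphere_subset_nball[of G v j] nball_mono[of j k G v]
          \<open>k = Suc j\<close> by auto
      then have "out x \<subseteq> nbrs G x - {w}" by (auto simp: out_def)
      then have "card (out x) \<le> card (nbrs G x - {w})"
        by (rule card_mono[rotated]) (simp add: finite_nbrs[OF wf])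
      then show ?thesis
        using finite_nbrs[OF wf] \<open>w \<in> nbrs G x\<close> by auto
    qed
    ultimately show ?thesis by (cases k) auto
  qed
  have "sphere G v (Suc k) \<subseteq> (\<Union>x\<in>sphere G v k. out x)"
  proof
    fix u assume u: "u \<in> sphere G v (Suc k)"
    then obtain x where "x \<in> sphere G v k" "adj G x u" by (rule sphere_SucE[OF wf])
    then show "u \<in> (\<Union>x\<in>sphere G v k. out x)" using u by (auto simp: out_def sphere_Suc)
  qed
  then have "card (sphere G v (Suc k)) \<le> card (\<Union>x\<in>sphere G v k. out x)"
    by (rule card_mono[rotated]) (auto simp: out_def finite_sphere[OF wf] finite_nbrs[OF wf])
  also have "\<dots> \<le> (\<Sum>x\<in>sphere G v k. card (out x))"
    by (rule card_UN_le[OF finite_sphere[OF wf]])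
  also have "\<dots> \<le> (\<Sum>x\<in>sphere G v k. (if k = 0 then \<Delta> else \<Delta> - 1))"
    by (rule sum_mono) (rule out_card)
  finally show ?thesis by simp
qed

lemma card_sphere_Suc_le_power:
  assumes wf: "wf_graph G" and md: "max_degree_le G \<Delta>" and v: "v \<in> verts G"
  shows "card (sphere G v (Suc k)) \<le> \<Delta> * (\<Delta> - 1) ^ k"
proof (induction k)
  case 0
  then show ?case using card_sphere_Suc_le[OF wf md, of v 0] v by (simp add: sphere_def nball_0)
next
  case (Suc k)
  have "card (sphere G v (Suc (Suc k))) \<le> card (sphere G v (Suc k)) * (\<Delta> - 1)"
    using card_sphere_Suc_le[OF wf md, of v "Suc k"] by simp
  also have "\<dots> \<le> \<Delta> * (\<Delta> - 1) ^ Suc k"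
    using Suc.IH by (simp add: mult.assoc mult.commute)
  finally show ?case .
qed

definition ball_bound :: "nat \<Rightarrow> nat \<Rightarrow> nat" where
  "ball_bound \<Delta> R = (if \<Delta> \<le> 2 then 2 * R + 1 else (\<Delta> + 1) ^ R)"

lemma card_nball_le_ball_bound:
  assumes wf: "wf_graph G" and md: "max_degree_le G \<Delta>" and v: "v \<in> verts G"
  shows "card (nball G v R) \<le> ball_bound \<Delta> R"
proof (induction R)
  case 0
  then show ?case by (simp add: nball_0[OF v] ball_bound_def)
next
  case (Suc R)
  have "card (nball G v (Suc R)) \<le> ball_bound \<Delta> R + \<Delta> * (\<Delta> - 1) ^ R"
    using card_Un_le[of "nball G v R" "sphere G v (Suc R)"] Suc.IH
      card_sphere_Suc_le_power[OF wf md v, of R]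
    by (simp add: nball_Suc_eq)
  also have "\<dots> \<le> ball_bound \<Delta> (Suc R)"
  proof (cases "\<Delta> \<le> 2")
    case True
    then have "\<Delta> \<in> {0, 1, 2}" by auto
    then have "\<Delta> * (\<Delta> - 1) ^ R \<le> 2" by (auto simp: power_0_left)
    then show ?thesis using True by (simp add: ball_bound_def)
  next
    case False
    have "\<Delta> * (\<Delta> - 1) ^ R \<le> \<Delta> * (\<Delta> + 1) ^ R"
      by (intro mult_le_mono2 power_mono) auto
    then show ?thesis using False by (simp add: ball_bound_def)
  qed
  finally show ?case .
qed

section \<open>Locality of the relaxed verifier\<close>

lemma relaxed_cong:
  "(\<And>u. u \<in> nball G a r \<Longrightarrow> L u = L' u) \<Longrightarrow> relaxed \<psi> r G \<sigma> L a = relaxed \<psi> r G \<sigma> L' a"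
  unfolding relaxed_def by auto

lemma relaxed_transfer:
  assumes lv: "local_verifier F \<psi> r" and "G \<in> F" "H \<in> F" "a \<in> verts G" "a \<in> verts H"
    and ball: "nball G a r = nball H a r"
    and edges: "\<And>x y. x \<in> nball G a r \<Longrightarrow> y \<in> nball G a r \<Longrightarrow> adj G x y = adj H x y"
    and labels: "\<And>u. u \<in> nball G a r \<Longrightarrow> L u = L' u"
  shows "relaxed \<psi> r G \<sigma> L a = relaxed \<psi> r H \<sigma> L' a"
proof -
  have "\<psi> G \<sigma> L'' a = \<psi> H \<sigma> L'' a" for L''
    using lv assms(2-5) ball edges unfolding local_verifier_def
    by (elim allE[of _ G] allE[of _ H] allE[of _ \<sigma>] allE[of _ L''] allE[of _ a] allE[of _ id])
      (auto simp: bij_betw_def)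
  then show ?thesis
    unfolding relaxed_def using ball labels by auto
qed

text \<open>Only edges at the boundary sphere of the ball may differ between \<open>G\<close> and \<open>H\<close>; this is what
  makes the balls of radius \<open>r\<close> around nodes at distance \<open>j \<le> R - r\<close> from \<open>v\<close> coincide.\<close>

definition ball_agrees :: "graph \<Rightarrow> graph \<Rightarrow> nat \<Rightarrow> nat \<Rightarrow> bool" where
  "ball_agrees G H v R \<longleftrightarrow> nball G v R \<subseteq> verts H
    \<and> (\<forall>x\<in>nball G v R. \<forall>y\<in>nball G v R. adj G x y = adj H x y)
    \<and> (\<forall>x\<in>nball G v (R - 1). \<forall>y. adj H x y \<longrightarrow> y \<in> nball G v R)"

context
  fixes G H v R
  assumes wf: "wf_graph G" and agrees: "ball_agrees G H v R"
begin

lemma ball_agrees_relpow_GH: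
  "(a, x) \<in> edge_rel G ^^ k \<Longrightarrow> dist_le G j v a \<Longrightarrow> j + k \<le> R
     \<Longrightarrow> (a, x) \<in> edge_rel H ^^ k \<and> dist_le G (j + k) v x"
proof (induction k arbitrary: x)
  case 0
  then show ?case by simp
next
  case (Suc k)
  then obtain y where y: "(a, y) \<in> edge_rel G ^^ k" "adj G y x"
    by (auto elim: relpow_Suc_E)
  with Suc have IH: "(a, y) \<in> edge_rel H ^^ k" "dist_le G (j + k) v y" by auto
  have x: "dist_le G (j + Suc k) v x"
    using dist_le_adj[OF wf IH(2) y(2)] by simp
  have "y \<in> nball G v R" "x \<in> nball G v R"
    using IH(2) x Suc.prems(3) dist_le_mono by (auto simp: mem_nball_iff)
  then have "adj H y x" using agrees y(2) unfolding ball_agrees_def by blast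
  then show ?case using IH x by (auto intro: relpow_Suc_I)
qed

lemma ball_agrees_relpow_HG:
  "(a, x) \<in> edge_rel H ^^ k \<Longrightarrow> dist_le G j v a \<Longrightarrow> j + k \<le> R
     \<Longrightarrow> (a, x) \<in> edge_rel G ^^ k \<and> dist_le G (j + k) v x"
proof (induction k arbitrary: x)
  case 0
  then show ?case by simp
next
  case (Suc k)
  then obtain y where y: "(a, y) \<in> edge_rel H ^^ k" "adj H y x"
    by (auto elim: relpow_Suc_E)
  with Suc have IH: "(a, y) \<in> edge_rel G ^^ k" "dist_le G (j + k) v y" by auto
  have "y \<in> nball G v (R - 1)" "y \<in> nball G v R"
    using IH(2) Suc.prems(3) dist_le_mono by (auto simp: mem_nball_iff)
  moreover from this have "x \<in> nball G v R"
    using agrees y(2) unfolding ball_agrees_def by blast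
  ultimately have "adj G y x" using agrees y(2) unfolding ball_agrees_def by blast
  then show ?case using IH dist_le_adj[OF wf IH(2)] by (auto intro: relpow_Suc_I)
qed

lemma ball_agrees_nball_eq:
  assumes a: "a \<in> nball G v j" and jr: "j + r \<le> R"
  shows "nball G a r = nball H a r"
proof -
  have a_dist: "dist_le G j v a" using a by (simp add: mem_nball_iff)
  have inner: "nball G a r \<subseteq> nball G v R"
    using nball_trans[OF a] nball_mono[OF jr] by blast
  have aH: "a \<in> verts H"
    using a nball_mono[of j R G v] jr agrees unfolding ball_agrees_def by auto
  show ?thesis
  proof
    show "nball G a r \<subseteq> nball H a r"
    proof
      fix u assume u: "u \<in> nball G a r"
      then obtain k where k: "k \<le> r" "(a, u) \<in> edge_rel G ^^ k"
        by (auto simp: mem_nball_iff dist_le_def)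
      then have "(a, u) \<in> edge_rel H ^^ k"
        using ball_agrees_relpow_GH[OF k(2) a_dist] jr by auto
      moreover have "u \<in> verts H" using u inner agrees unfolding ball_agrees_def by auto
      ultimately show "u \<in> nball H a r" using k aH by (auto simp: mem_nball_iff dist_le_def)
    qed
  next
    show "nball H a r \<subseteq> nball G a r"
    proof
      fix u assume "u \<in> nball H a r"
      then obtain k where k: "k \<le> r" "(a, u) \<in> edge_rel H ^^ k"
        by (auto simp: mem_nball_iff dist_le_def)
      then have "(a, u) \<in> edge_rel G ^^ k \<and> dist_le G (j + k) v u"
        using ball_agrees_relpow_HG[OF k(2) a_dist] jr by auto
      then show "u \<in> nball G a r" using k a_dist by (auto simp: mem_nball_iff dist_le_def)
    qed
  qed
qed

lemma ball_agrees_relaxed: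
  assumes lv: "local_verifier F \<psi> r" and "G \<in> F" "H \<in> F"
    and a: "a \<in> nball G v j" and jr: "j + r \<le> R"
    and labels: "\<And>u. u \<in> nball G a r \<Longrightarrow> L u = L' u"
  shows "relaxed \<psi> r G \<sigma> L a = relaxed \<psi> r H \<sigma> L' a"
proof (rule relaxed_transfer[OF lv \<open>G \<in> F\<close> \<open>H \<in> F\<close> _ _ ball_agrees_nball_eq[OF a jr] _ labels])
  show "a \<in> verts G" using a nball_subset_verts by blast
  then show "a \<in> verts H" using ball_agrees_nball_eq[OF a jr] center_in_nball nball_subset_verts
    by blast
  have "nball G a r \<subseteq> nball G v R"
    using nball_trans[OF a] nball_mono[OF jr] by blast
  then show "adj G x y = adj H x y" if "x \<in> nball G a r" "y \<in> nball G a r" for x y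
    using that agrees unfolding ball_agrees_def by blast
qed

end

lemma is_mend_mono: "is_mend \<psi> r G \<sigma> L v t \<mu> \<Longrightarrow> t \<le> t' \<Longrightarrow> is_mend \<psi> r G \<sigma> L v t' \<mu>"
  unfolding is_mend_def using dist_le_mono by blast

lemma relaxed_accepts_restrict:
  assumes lv: "local_verifier F \<psi> r" and GF: "G \<in> F" and HF: "H \<in> F"
    and wf: "wf_graph G" and agrees: "ball_agrees G H v R" and r: "r \<le> R"
    and acc: "relaxed_accepts \<psi> r G \<sigma> L"
  shows "relaxed_accepts \<psi> r H \<sigma> (\<lambda>u. if u \<in> nball G v (R - r) then L u else None)"
    (is "relaxed_accepts \<psi> r H \<sigma> ?LH")
  unfolding relaxed_accepts_def
proof
  fix x assume xH: "x \<in> verts H"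
  show "relaxed \<psi> r H \<sigma> ?LH x"
  proof (cases "\<exists>u\<in>nball H x r. ?LH u = None")
    case True
    then show ?thesis unfolding relaxed_def by blast
  next
    case False
    then have x: "x \<in> nball G v (R - r)" using xH center_in_nball by fastforce
    moreover have "nball H x r \<subseteq> nball G v (R - r)" using False by (auto split: if_splits)
    moreover have "nball G x r = nball H x r"
      using ball_agrees_nball_eq[OF wf agrees x] r by simp
    ultimately have "relaxed \<psi> r G \<sigma> L x = relaxed \<psi> r H \<sigma> ?LH x"
      using r by (intro ball_agrees_relaxed[OF wf agrees lv GF HF x]) auto
    moreover have "x \<in> verts G" using x nball_subset_verts by blast
    ultimately show ?thesis using acc unfolding relaxed_accepts_def by simp
  qed
qed

text \<open>A node within \<open>R - 2r\<close> of \<open>v\<close> sees the pasted labeling exactly as \<open>\<mu>H\<close> in \<open>H\<close>; a node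
  farther out sees only \<open>L\<close>, because the labeling differs from \<open>L\<close> only within \<open>t \<le> R - 3r\<close>.\<close>

lemma relaxed_accepts_paste:
  assumes lv: "local_verifier F \<psi> r" and GF: "G \<in> F" and HF: "H \<in> F"
    and wf: "wf_graph G" and v: "v \<in> verts G" and agrees: "ball_agrees G H v R"
    and tR: "t + 3 * r \<le> R"
    and acc: "relaxed_accepts \<psi> r G \<sigma> L" and accH: "relaxed_accepts \<psi> r H \<sigma> \<mu>H"
    and changed: "\<And>u. u \<in> verts G \<Longrightarrow> (if u \<in> nball G v (R - r) then \<mu>H u else L u) \<noteq> L u
      \<Longrightarrow> dist_le G t v u"
  shows "relaxed_accepts \<psi> r G \<sigma> (\<lambda>u. if u \<in> nball G v (R - r) then \<mu>H u else L u)"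
    (is "relaxed_accepts \<psi> r G \<sigma> ?\<mu>")
  unfolding relaxed_accepts_def
proof
  fix a assume aG: "a \<in> verts G"
  show "relaxed \<psi> r G \<sigma> ?\<mu> a"
  proof (cases "a \<in> nball G v (R - 2 * r)")
    case True
    have "R - 2 * r + r = R - r" using tR by simp
    then have "nball G a r \<subseteq> nball G v (R - r)" using nball_trans[OF True, of _ r] by auto
    then have "relaxed \<psi> r G \<sigma> ?\<mu> a = relaxed \<psi> r H \<sigma> \<mu>H a"
      using tR by (intro ball_agrees_relaxed[OF wf agrees lv GF HF True]) auto
    moreover have "a \<in> verts H"
      using True ball_agrees_nball_eq[OF wf agrees center_in_nball[OF v, of 0], of "R - 2 * r"]
        nball_subset_verts[of H v "R - 2 * r"] by auto
    ultimately show ?thesis using accH unfolding relaxed_accepts_def by simp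
  next
    case False
    have "?\<mu> u = L u" if u: "u \<in> nball G a r" for u
    proof (rule ccontr)
      assume "?\<mu> u \<noteq> L u"
      then have "dist_le G t v u" using changed u nball_subset_verts by blast
      moreover have "dist_le G r u a" using u wf dist_le_sym by (auto simp: mem_nball_iff)
      ultimately have "dist_le G (R - 2 * r) v a"
        using tR by (auto intro: dist_le_mono dist_le_trans)
      then show False using False by (simp add: mem_nball_iff)
    qed
    then have "relaxed \<psi> r G \<sigma> ?\<mu> a = relaxed \<psi> r G \<sigma> L a" by (rule relaxed_cong)
    then show ?thesis using acc aG unfolding relaxed_accepts_def by simp
  qed
qed

lemma mend_transplant:
  assumes lv: "local_verifier F \<psi> r" and GF: "G \<in> F" and HF: "H \<in> F"
    and wf: "wf_graph G" and v: "v \<in> verts G" and agrees: "ball_agrees G H v R"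
    and tR: "t + 3 * r \<le> R"
    and acc: "relaxed_accepts \<psi> r G \<sigma> L"
    and mend_H: "\<And>L'. relaxed_accepts \<psi> r H \<sigma> L' \<Longrightarrow> \<exists>\<mu>. is_mend \<psi> r H \<sigma> L' v t \<mu>"
  shows "\<exists>\<mu>. is_mend \<psi> r G \<sigma> L v t \<mu>"
proof -
  define core where "core = nball G v (R - r)"
  have nball_v: "nball G v s = nball H v s" if "s \<le> R" for s
    using ball_agrees_nball_eq[OF wf agrees center_in_nball[OF v, of 0]] that by simp
  have core_H: "core \<subseteq> verts H"
    using nball_v[of "R - r"] nball_subset_verts core_def by auto
  obtain \<mu>H where \<mu>H: "is_mend \<psi> r H \<sigma> (\<lambda>u. if u \<in> core then L u else None) v t \<mu>H"
    using mend_H relaxed_accepts_restrict[OF lv GF HF wf agrees _ acc] tR core_def by fastforce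
  define \<mu> where "\<mu> u = (if u \<in> core then \<mu>H u else L u)" for u
  have changed: "dist_le G t v u" if "u \<in> verts G" "\<mu> u \<noteq> L u" for u
  proof -
    have "u \<in> core" "\<mu>H u \<noteq> L u" using that by (auto simp: \<mu>_def split: if_splits)
    then have "dist_le H t v u" using \<mu>H core_H unfolding is_mend_def by auto
    then show ?thesis using nball_v[of t] tR by (auto simp: mem_nball_iff)
  qed
  have "relaxed_accepts \<psi> r G \<sigma> \<mu>"
    unfolding \<mu>_def core_def
    by (rule relaxed_accepts_paste[OF lv GF HF wf v agrees tR acc])
      (use \<mu>H changed in \<open>auto simp: is_mend_def \<mu>_def core_def\<close>)
  moreover have "\<mu> v \<noteq> None"
    using \<mu>H v by (simp add: \<mu>_def is_mend_def core_def center_in_nball)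
  moreover have "L u = None" if "u \<in> verts G" "\<mu> u = None" for u
    using that \<mu>H core_H unfolding is_mend_def by (auto simp: \<mu>_def split: if_splits)
  ultimately show ?thesis
    using changed unfolding is_mend_def by blast
qed

section \<open>Graphs of the family with a prescribed ball\<close>

lemma is_cycle_in_two_nbrs:
  assumes c: "is_cycle_in G xs" and wf: "wf_graph G" and x: "x \<in> set xs"
  obtains a b where "a \<in> set xs" "b \<in> set xs" "a \<noteq> b" "a \<noteq> x" "b \<noteq> x" "adj G x a" "adj G x b"
proof -
  define n where "n = length xs"
  have n: "n \<ge> 3" and dist: "distinct xs"
    and cyc_adj: "\<And>i. i < n \<Longrightarrow> adj G (xs ! i) (xs ! ((i + 1) mod n))"
    using c unfolding is_cycle_in_def n_def by auto
  obtain i where i: "i < n" "xs ! i = x" using x by (auto simp: in_set_conv_nth n_def)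
  define succ where "succ = (if i + 1 = n then 0 else i + 1)"
  define pred where "pred = (if i = 0 then n - 1 else i - 1)"
  have idx: "succ < n" "pred < n" "succ \<noteq> pred" "succ \<noteq> i" "pred \<noteq> i"
    "(i + 1) mod n = succ" "(pred + 1) mod n = i"
    using n i by (auto simp: succ_def pred_def)
  have "adj G x (xs ! succ)" "adj G (xs ! pred) x"
    using cyc_adj[OF i(1)] cyc_adj[OF idx(2)] i idx by auto
  moreover have "xs ! succ \<noteq> xs ! pred" "xs ! succ \<noteq> x" "xs ! pred \<noteq> x"
    using idx i dist by (auto simp: nth_eq_iff_index_eq n_def)
  ultimately show ?thesis
    using that[of "xs ! succ" "xs ! pred"] idx wf_graph_adj_sym[OF wf] by (simp add: n_def)
qed

definition fresh_vertex :: "graph \<Rightarrow> nat" where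
  "fresh_vertex G = Suc (Max (verts G))"

lemma fresh_vertex_gt: "wf_graph G \<Longrightarrow> x \<in> verts G \<Longrightarrow> x < fresh_vertex G"
  unfolding fresh_vertex_def using Max_ge[OF wf_graph_finite] by (simp add: le_imp_less_Suc)

definition extend_ball :: "graph \<Rightarrow> nat set \<Rightarrow> nat \<Rightarrow> nat \<Rightarrow> (nat \<Rightarrow> nat \<Rightarrow> bool) \<Rightarrow> graph" where
  "extend_ball G B K m P =
     (B \<union> {K..<K + m}, \<lambda>x y. (x \<in> B \<and> y \<in> B \<and> adj G x y) \<or> P x y \<or> P y x)"

lemma verts_extend_ball [simp]: "verts (extend_ball G B K m P) = B \<union> {K..<K + m}"
  by (simp add: extend_ball_def verts_def)

lemma adj_extend_ball [simp]:
  "adj (extend_ball G B K m P) x y \<longleftrightarrow> (x \<in> B \<and> y \<in> B \<and> adj G x y) \<or> P x y \<or> P y x"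
  by (simp add: extend_ball_def adj_def)

locale fresh_extension =
  fixes G :: graph and B :: "nat set" and K m :: nat
  assumes wf: "wf_graph G" and B_verts: "B \<subseteq> verts G"
    and fresh: "\<And>x. x \<in> verts G \<Longrightarrow> x < K"
begin

lemma finite_B: "finite B"
  using finite_subset[OF B_verts wf_graph_finite[OF wf]] .

lemma B_less: "x \<in> B \<Longrightarrow> x < K"
  using B_verts fresh by blast

lemma wf_extend_ball:
  assumes "\<And>x y. P x y \<Longrightarrow> x \<in> B \<union> {K..<K + m} \<and> y \<in> B \<union> {K..<K + m} \<and> x \<noteq> y"
  shows "wf_graph (extend_ball G B K m P)"
  unfolding wf_graph_def using assms finite_B wf_graph_adj_sym[OF wf] wf_graph_adj_irrefl[OF wf]
  by auto

lemma card_extend_ball: "card (verts (extend_ball G B K m P)) = card B + m"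
proof -
  have "B \<inter> {K..<K + m} = {}" using B_less by fastforce
  then show ?thesis using finite_B by (simp add: card_Un_disjoint)
qed

lemma nbrs_extend_ball:
  "x \<in> B \<Longrightarrow> (\<And>y. \<not> P x y \<and> \<not> P y x) \<Longrightarrow> nbrs (extend_ball G B K m P) x = {u \<in> B. adj G x u}"
  by auto

lemma ball_agrees_extend_ball:
  assumes B: "B = nball G v R"
    and P: "\<And>x y. P x y \<Longrightarrow> (x \<notin> B \<or> y \<notin> B) \<and> x \<notin> nball G v (R - 1) \<and> y \<notin> nball G v (R - 1)"
  shows "ball_agrees G (extend_ball G B K m P) v R"
  unfolding ball_agrees_def using B P nball_mono[of "R - 1" R G v] by auto

lemma max_degree_le_padding:
  assumes "max_degree_le G \<Delta>"
  shows "max_degree_le (extend_ball G B K m (\<lambda>_ _. False)) \<Delta>"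
  unfolding max_degree_le_def degree_def
proof
  fix x
  show "card (nbrs (extend_ball G B K m (\<lambda>_ _. False)) x) \<le> \<Delta>"
  proof (cases "x \<in> B")
    case True
    then have "card (nbrs (extend_ball G B K m (\<lambda>_ _. False)) x) \<le> card (nbrs G x)"
      by (intro card_mono[OF finite_nbrs[OF wf]]) auto
    also have "\<dots> \<le> \<Delta>" using assms True B_verts max_degree_leD by blast
    finally show ?thesis .
  qed simp
qed

end

text \<open>The path \<open>K, K + 1, \<dots>, K + m - 1\<close> hung at \<open>z\<close> and, if \<open>e = Some q\<close>, closed up at \<open>q\<close>.\<close>

definition path_edge :: "nat \<Rightarrow> nat option \<Rightarrow> nat \<Rightarrow> nat \<Rightarrow> nat \<Rightarrow> nat \<Rightarrow> bool" where
  "path_edge z e K m x y \<longleftrightarrow>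
     (x = z \<and> y = K) \<or> (K \<le> x \<and> Suc x < K + m \<and> y = Suc x) \<or> (Suc x = K + m \<and> e = Some y)"

locale path_extension = fresh_extension +
  fixes z :: nat and e :: "nat option"
  assumes z: "z \<in> B" and e: "set_option e \<subseteq> B - {z}" and m: "m \<ge> 1"
begin

abbreviation H :: graph where
  "H \<equiv> extend_ball G B K m (path_edge z e K m)"

lemma z_less: "z < K"
  using B_less z by blast

lemma end_in_B: "e = Some q \<Longrightarrow> q \<in> B" and end_not_z: "e \<noteq> Some z"
  using e by auto

lemma path_edge_fresh: "path_edge z e K m x y \<Longrightarrow> K \<le> x \<or> K \<le> y"
  unfolding path_edge_def using m by auto

lemma wf_H: "wf_graph H"
proof (rule wf_extend_ball)
  fix x y assume "path_edge z e K m x y"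
  then show "x \<in> B \<union> {K..<K + m} \<and> y \<in> B \<union> {K..<K + m} \<and> x \<noteq> y"
    unfolding path_edge_def using z z_less m end_in_B B_less by fastforce
qed

lemma card_H: "card (verts H) = card B + m"
  by (rule card_extend_ball)

lemma adj_H_B: "x \<in> B \<Longrightarrow> y \<in> B \<Longrightarrow> adj H x y \<longleftrightarrow> adj G x y"
  using B_less[of x] B_less[of y] path_edge_fresh[of x y] path_edge_fresh[of y x] by auto

lemma nbrs_H_inner: "x \<in> B \<Longrightarrow> x \<noteq> z \<Longrightarrow> e \<noteq> Some x \<Longrightarrow> nbrs H x = {u \<in> B. adj G x u}"
  using B_less[of x] m by (intro nbrs_extend_ball) (auto simp: path_edge_def)

lemma nbrs_H_z: "nbrs H z = {u \<in> B. adj G z u} \<union> {K}"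
  using z z_less end_not_z m by (auto simp: path_edge_def)

lemma nbrs_H_end:
  assumes "e = Some q"
  shows "nbrs H q = {u \<in> B. adj G q u} \<union> {K + m - 1}"
  using assms m end_in_B[OF assms] B_less[of q] z_less end_not_z by (auto simp: path_edge_def)

lemma nbrs_H_path:
  assumes "K \<le> x" "x < K + m"
  shows "nbrs H x = {if x = K then z else x - 1} \<union> (if Suc x < K + m then {Suc x} else set_option e)"
proof -
  have "x \<notin> B" using assms(1) B_less by force
  moreover have "q < K" if "e = Some q" for q using that end_in_B B_less by blast
  ultimately show ?thesis using assms z_less by (auto simp: path_edge_def)
qed

lemma ball_agrees_H:
  assumes B: "B = nball G v R"
    and ends: "z \<notin> nball G v (R - 1)" "\<And>q. e = Some q \<Longrightarrow> q \<notin> nball G v (R - 1)"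
  shows "ball_agrees G H v R"
proof (rule ball_agrees_extend_ball[OF B])
  have "nball G v (R - 1) \<subseteq> B" using B nball_mono[of "R - 1" R G v] by simp
  then have inner: "x \<notin> nball G v (R - 1)" "x \<notin> B" if "K \<le> x" for x
    using that B_less by fastforce+
  show "(x \<notin> B \<or> y \<notin> B) \<and> x \<notin> nball G v (R - 1) \<and> y \<notin> nball G v (R - 1)"
    if "path_edge z e K m x y" for x y
    using that unfolding path_edge_def
  proof (elim disjE conjE)
    assume "x = z" "y = K"
    then show ?thesis using ends(1) inner[of K] by simp
  next
    assume "K \<le> x" "y = Suc x"
    then show ?thesis using inner[of x] inner[of y] by simp
  next
    assume "Suc x = K + m" "e = Some y"
    then show ?thesis using ends(2) inner[of x] m by simp
  qed
qed

lemma connected_H: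
  assumes B: "B = nball G v R" and v: "v \<in> verts G" and agrees: "ball_agrees G H v R"
  shows "connected_graph H"
proof -
  have to_B: "(v, x) \<in> (edge_rel H)\<^sup>*" if "x \<in> B" for x
  proof -
    have "dist_le G R v x" using that B by (simp add: mem_nball_iff)
    then obtain k where k: "k \<le> R" "(v, x) \<in> edge_rel G ^^ k"
      unfolding dist_le_def by blast
    then have "(v, x) \<in> edge_rel H ^^ k"
      using ball_agrees_relpow_GH[OF wf agrees k(2), of 0] v by (simp add: dist_le_0_iff)
    then show ?thesis by (rule relpow_imp_rtrancl)
  qed
  have to_path: "(v, K + i) \<in> (edge_rel H)\<^sup>*" if "i < m" for i
    using that
  proof (induction i)
    case 0
    have "(z, K + 0) \<in> edge_rel H" by (simp add: path_edge_def)
    then show ?case by (rule rtrancl_into_rtrancl[OF to_B[OF z]])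
  next
    case (Suc i)
    then have "(K + i, K + Suc i) \<in> edge_rel H" by (simp add: path_edge_def)
    then show ?case using Suc by (intro rtrancl_into_rtrancl[OF Suc.IH]) simp_all
  qed
  have from_v: "(v, x) \<in> (edge_rel H)\<^sup>*" if "x \<in> verts H" for x
  proof (cases "x \<in> B")
    case False
    then have "K \<le> x" "x - K < m" using that by auto
    then show ?thesis using to_path[of "x - K"] by simp
  qed (rule to_B)
  have "sym (edge_rel H)"
    using wf_graph_adj_sym[OF wf_H] unfolding sym_def by (simp del: adj_extend_ball)
  then have "(x, v) \<in> (edge_rel H)\<^sup>*" if "x \<in> verts H" for x
    using from_v[OF that] sym_rtrancl unfolding sym_def by blast
  then show ?thesis
    unfolding connected_graph_def using from_v by (meson rtrancl_trans)
qed

text \<open>The largest vertex of a cycle through the path would be a path vertex with two smaller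
  neighbours on the cycle, but it has only one.\<close>

lemma no_cycle_H:
  assumes open_path: "e = None" and acyclic: "\<not> (\<exists>xs. is_cycle_in G xs)"
  shows "\<not> (\<exists>xs. is_cycle_in H xs)"
proof
  assume "\<exists>xs. is_cycle_in H xs"
  then obtain xs where c: "is_cycle_in H xs" by blast
  show False
  proof (cases "set xs \<subseteq> B")
    case True
    have "adj G (xs ! i) (xs ! ((i + 1) mod length xs))" if "i < length xs" for i
    proof -
      have "(i + 1) mod length xs < length xs"
        using mod_less_divisor[of "length xs" "i + 1"] that by linarith
      then have "xs ! i \<in> B" "xs ! ((i + 1) mod length xs) \<in> B"
        using True that nth_mem by blast+
      then show ?thesis using c that adj_H_B unfolding is_cycle_in_def by blast
    qed
    then have "is_cycle_in G xs"
      using c True B_verts unfolding is_cycle_in_def by auto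
    then show False using acyclic by blast
  next
    case False
    define x where "x = Max (set xs)"
    have "set xs \<noteq> {}" using False by auto
    then have "x \<in> set xs" "\<And>w. w \<in> set xs \<Longrightarrow> w \<le> x"
      by (simp_all add: x_def)
    moreover have xs_H: "set xs \<subseteq> B \<union> {K..<K + m}" using c unfolding is_cycle_in_def by simp
    ultimately have x: "K \<le> x" "x < K + m"
      using False B_less by fastforce+
    obtain a b where ab: "a \<in> set xs" "b \<in> set xs" "a \<noteq> b" "a \<noteq> x" "b \<noteq> x" "adj H x a" "adj H x b"
      using is_cycle_in_two_nbrs[OF c wf_H \<open>x \<in> set xs\<close>] .
    have "a < x" "b < x" using ab \<open>\<And>w. w \<in> set xs \<Longrightarrow> w \<le> x\<close> by (auto simp: le_less)
    moreover have "nbrs H x \<subseteq> {if x = K then z else x - 1, Suc x}"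
      using nbrs_H_path[OF x] open_path by auto
    then have "a \<in> {if x = K then z else x - 1, Suc x}" "b \<in> {if x = K then z else x - 1, Suc x}"
      using ab(6,7) by blast+
    ultimately show False using ab(3) by auto
  qed
qed

end

lemma exists_edge_leaving_nball:
  assumes con: "connected_graph G" and v: "v \<in> verts G" and not_covered: "\<not> verts G \<subseteq> nball G v k"
  obtains x y where "x \<in> nball G v k" "adj G x y" "y \<notin> nball G v k"
proof -
  obtain u where u: "u \<in> verts G" "u \<notin> nball G v k" using not_covered by blast
  have "(v, u) \<in> (edge_rel G)\<^sup>*" using con v u unfolding connected_graph_def by blast
  then have "\<exists>x y. x \<in> nball G v k \<and> adj G x y \<and> y \<notin> nball G v k"
    using u(2)
  proof (induction rule: rtrancl_induct)
    case base
    then show ?case using v by (simp add: center_in_nball)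
  next
    case (step a b)
    then show ?case by (cases "a \<in> nball G v k") auto
  qed
  then show ?thesis using that by blast
qed

lemma leaving_edge_from_sphere:
  assumes wf: "wf_graph G" and x: "x \<in> nball G v k" and xy: "adj G x y" and y: "y \<notin> nball G v k"
  shows "y \<in> sphere G v (Suc k)" "x \<in> sphere G v k"
proof -
  show "y \<in> sphere G v (Suc k)" using nball_adj[OF wf x xy] y by (simp add: sphere_Suc)
  have "x \<notin> nball G v (k - 1)" if "k \<ge> 1"
    using nball_adj[OF wf _ xy] y that by fastforce
  then show "x \<in> sphere G v k" using x by (auto simp: sphere_def)
qed

lemma sphere_Suc_nonempty:
  assumes wf: "wf_graph G" and con: "connected_graph G" and v: "v \<in> verts G"
    and not_covered: "\<not> verts G \<subseteq> nball G v R" and j: "j \<le> R"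
  shows "sphere G v (Suc j) \<noteq> {}"
proof -
  have "\<not> verts G \<subseteq> nball G v j" using not_covered nball_mono[OF j] by blast
  then obtain x y where "x \<in> nball G v j" "adj G x y" "y \<notin> nball G v j"
    by (rule exists_edge_leaving_nball[OF con v])
  then show ?thesis using leaving_edge_from_sphere(1)[OF wf] by blast
qed

lemma sphere_Suc_Suc_empty:
  assumes wf: "wf_graph G" and closed: "\<And>x. x \<in> sphere G v (Suc k) \<Longrightarrow> nbrs G x \<subseteq> nball G v (Suc k)"
  shows "sphere G v (Suc (Suc k)) = {}"
proof (rule ccontr)
  assume "sphere G v (Suc (Suc k)) \<noteq> {}"
  then obtain y where y: "y \<in> sphere G v (Suc (Suc k))" by blast
  then obtain x where "x \<in> sphere G v (Suc k)" "adj G x y" by (rule sphere_SucE[OF wf])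
  moreover have "y \<notin> nball G v (Suc k)" using y by (simp add: sphere_Suc)
  ultimately show False using closed by blast
qed

lemma exists_graph_extension:
  assumes G: "G \<in> bdeg_graphs \<Delta>" and M: "card (nball G v R) \<le> M"
  shows "\<exists>H\<in>bdeg_graphs \<Delta>. card (verts H) = M \<and> ball_agrees G H v R"
proof -
  have wf: "wf_graph G" and md: "max_degree_le G \<Delta>" using G by (auto simp: bdeg_graphs_def)
  interpret fresh_extension G "nball G v R" "fresh_vertex G" "M - card (nball G v R)"
    using wf nball_subset_verts fresh_vertex_gt by unfold_locales auto
  let ?H = "extend_ball G (nball G v R) (fresh_vertex G) (M - card (nball G v R)) (\<lambda>_ _. False)"
  have "?H \<in> bdeg_graphs \<Delta>"
    using wf_extend_ball max_degree_le_padding[OF md] by (simp add: bdeg_graphs_def)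
  moreover have "card (verts ?H) = M" using card_extend_ball M by simp
  moreover have "ball_agrees G ?H v R" by (rule ball_agrees_extend_ball) simp_all
  ultimately show ?thesis by blast
qed

context path_extension
begin

lemma max_degree_le_H_open:
  assumes md: "max_degree_le G \<Delta>" and \<Delta>: "2 \<le> \<Delta>" and open_path: "e = None"
    and y: "adj G z y" "y \<notin> B"
  shows "max_degree_le H \<Delta>"
  unfolding max_degree_le_def degree_def
proof
  fix x assume xH: "x \<in> verts H"
  have deg_G: "card (nbrs G u) \<le> \<Delta>" if "u \<in> B" for u
    using md that B_verts max_degree_leD by blast
  consider "x \<in> B" "x \<noteq> z" | "x = z" | "K \<le> x" "x < K + m" using xH by force
  then show "card (nbrs H x) \<le> \<Delta>"
  proof cases
    case 1
    then have "card (nbrs H x) \<le> card (nbrs G x)"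
      using nbrs_H_inner open_path by (auto intro!: card_mono finite_nbrs[OF wf])
    then show ?thesis using deg_G[OF 1(1)] by linarith
  next
    case 2
    have "{u \<in> B. adj G z u} \<subseteq> nbrs G z - {y}" using y by auto
    then have "card {u \<in> B. adj G z u} \<le> card (nbrs G z - {y})"
      by (rule card_mono[rotated]) (simp add: finite_nbrs[OF wf])
    then have "card {u \<in> B. adj G z u} \<le> card (nbrs G z) - 1"
      using finite_nbrs[OF wf] y by simp
    moreover have "card (nbrs H z) \<le> card {u \<in> B. adj G z u} + 1"
      unfolding nbrs_H_z using card_Un_le[of "{u \<in> B. adj G z u}" "{K}"] by simp
    moreover have "card (nbrs G z) \<ge> 1"
      using y finite_nbrs[OF wf] card_0_eq[of "nbrs G z"] by fastforce
    ultimately show ?thesis using deg_G[OF z] unfolding 2 by linarith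
  next
    case 3
    then have "nbrs H x \<subseteq> {if x = K then z else x - 1, Suc x}"
      using nbrs_H_path open_path by auto
    then have "card (nbrs H x) \<le> card {if x = K then z else x - 1, Suc x}"
      by (rule card_mono[rotated]) simp
    also have "\<dots> \<le> \<Delta>" using \<Delta> by (simp add: card_insert_if)
    finally show ?thesis .
  qed
qed

end

lemma exists_tree_extension:
  assumes G: "G \<in> bdeg_trees \<Delta>" and v: "v \<in> verts G" and R: "R \<ge> 1"
    and not_covered: "\<not> verts G \<subseteq> nball G v R" and M: "card (nball G v R) < M"
  shows "\<exists>H\<in>bdeg_trees \<Delta>. card (verts H) = M \<and> ball_agrees G H v R"
proof -
  have wf: "wf_graph G" and md: "max_degree_le G \<Delta>" and con: "connected_graph G"
    and acyclic: "\<not> (\<exists>xs. is_cycle_in G xs)"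
    using G by (auto simp: bdeg_trees_def is_tree_def)
  obtain z y where zy: "z \<in> nball G v R" "adj G z y" "y \<notin> nball G v R"
    using exists_edge_leaving_nball[OF con v not_covered] by blast
  have "z \<in> sphere G v (Suc (R - 1))"
    using leaving_edge_from_sphere(2)[OF wf zy] R by simp
  then obtain w where w: "w \<in> sphere G v (R - 1)" "adj G w z" by (rule sphere_SucE[OF wf])
  have "w \<in> nball G v R" using w(1) sphere_subset_nball[of G v "R - 1"] nball_mono[of "R - 1" R G v] by auto
  then have "{w, y} \<subseteq> nbrs G z" "card {w, y} = 2"
    using w(2) zy wf_graph_adj_sym[OF wf] by (auto simp: card_2_iff)
  then have "2 \<le> card (nbrs G z)" using card_mono[OF finite_nbrs[OF wf]] by metis
  also have "\<dots> \<le> \<Delta>" using max_degree_leD[OF md] zy(1) nball_subset_verts by blast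
  finally have \<Delta>: "2 \<le> \<Delta>" .
  interpret path_extension G "nball G v R" "fresh_vertex G" "M - card (nball G v R)" z None
    using wf nball_subset_verts fresh_vertex_gt zy(1) M by unfold_locales auto
  have agrees: "ball_agrees G H v R"
    using leaving_edge_from_sphere(2)[OF wf zy] R by (intro ball_agrees_H) (auto simp: sphere_def)
  have "H \<in> bdeg_trees \<Delta>"
    unfolding bdeg_trees_def is_tree_def
    using wf_H max_degree_le_H_open[OF md \<Delta> refl zy(2,3)] connected_H[OF refl v agrees]
      no_cycle_H[OF refl acyclic] center_in_nball[OF v, of R]
    by auto
  moreover have "card (verts H) = M" using card_H M by simp
  ultimately show ?thesis using agrees by blast
qed

section \<open>Balls in cycles\<close>

locale two_regular =
  fixes G :: graph and v :: nat
  assumes wf: "wf_graph G" and deg2: "\<And>x. x \<in> verts G \<Longrightarrow> card (nbrs G x) = 2"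
    and v: "v \<in> verts G"
begin

lemma nbrs_eq_pair:
  assumes "x \<in> verts G" "adj G x p" "adj G x q" "p \<noteq> q"
  shows "nbrs G x = {p, q}"
proof -
  have "{p, q} \<subseteq> nbrs G x" "card {p, q} = card (nbrs G x)" using assms deg2 by auto
  then show ?thesis by (rule card_subset_eq[OF finite_nbrs[OF wf], symmetric])
qed

lemma other_nbr:
  assumes "x \<in> verts G" "adj G x p"
  obtains q where "q \<noteq> p" "nbrs G x = {p, q}"
proof -
  obtain c d where cd: "nbrs G x = {c, d}" "c \<noteq> d" using deg2[OF assms(1)] by (auto simp: card_2_iff)
  then consider "p = c" | "p = d" using assms(2) by auto
  then show ?thesis
  proof cases
    case 1
    then show ?thesis using cd that[of d] by auto
  next
    case 2
    then show ?thesis using cd that[of c] by (auto simp: insert_commute)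
  qed
qed

lemma nball_1: "nball G v 1 = insert v (nbrs G v)"
proof -
  have "u \<in> nball G v (Suc 0) \<longleftrightarrow> u = v \<or> adj G v u" for u
    using v dist_le_SucE[OF wf, of 0 v u] dist_le_adj[OF wf, of 0 v v u]
    by (auto simp: mem_nball_iff dist_le_0_iff dist_le_refl)
  then show ?thesis by auto
qed

text \<open>The radius-\<open>k\<close> ball is a path whose two end vertices are \<open>a\<close> and \<open>b\<close>.\<close>

definition two_ends :: "nat \<Rightarrow> bool" where
  "two_ends k \<longleftrightarrow> (\<exists>a b. a \<noteq> b \<and> sphere G v k = {a, b}
      \<and> (\<exists>a'. nbrs G a \<inter> nball G v k = {a'}) \<and> (\<exists>b'. nbrs G b \<inter> nball G v k = {b'}))"

lemma two_ends_1:
  assumes "sphere G v 2 \<noteq> {}"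
  shows "two_ends 1"
proof -
  obtain a b where ab: "nbrs G v = {a, b}" "a \<noteq> b" using deg2[OF v] by (auto simp: card_2_iff)
  have "adj G v a" "adj G v b" using ab by auto
  then have av: "adj G a v" "adj G b v" "a \<in> verts G" "b \<in> verts G" "a \<noteq> v" "b \<noteq> v"
    using wf_graph_adj_sym[OF wf] wf_graph_adjD[OF wf] wf_graph_adj_irrefl[OF wf] by auto
  have ball_1: "nball G v (Suc 0) = {v, a, b}" using nball_1 ab by simp
  have sphere_1: "sphere G v (Suc 0) = {a, b}"
    using ball_1 av v by (auto simp: sphere_Suc nball_0)
  have "\<not> adj G a b"
  proof
    assume "adj G a b"
    then have "adj G b a" using wf_graph_adj_sym[OF wf] by blast
    then have "nbrs G a = {v, b}" "nbrs G b = {v, a}"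
      using nbrs_eq_pair[OF av(3) av(1) \<open>adj G a b\<close>] nbrs_eq_pair[OF av(4) av(2)] av(5,6)
      by auto
    then have "nbrs G x \<subseteq> nball G v (Suc 0)" if "x \<in> sphere G v (Suc 0)" for x
      using that sphere_1 ball_1 by auto
    then show False using sphere_Suc_Suc_empty[OF wf] assms by (simp add: numeral_2_eq_2)
  qed
  then have "nbrs G a \<inter> nball G v 1 = {v}" "nbrs G b \<inter> nball G v 1 = {v}"
    unfolding One_nat_def ball_1
    using av wf_graph_adj_sym[OF wf] wf_graph_adj_irrefl[OF wf] by blast+
  then show ?thesis unfolding two_ends_def using sphere_1 ab(2) by auto
qed

text \<open>If \<open>a1\<close> had a second neighbour in the radius-\<open>(k+1)\<close> ball, that ball would already be
  the whole cycle.\<close>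

lemma new_end_nbrs:
  assumes k: "k \<ge> 1" and sphere_k: "sphere G v k = {a, b}"
    and sphere_Suc: "sphere G v (Suc k) = {a1, b1}" and "a1 \<noteq> b1"
    and nbrs_a: "nbrs G a = {a', a1}" and nbrs_b: "nbrs G b = {b', b1}"
    and inner: "a' \<in> nball G v k" "b' \<in> nball G v k"
    and outer: "a1 \<notin> nball G v k" "b1 \<notin> nball G v k"
    and not_closed: "sphere G v (Suc (Suc k)) \<noteq> {}"
  shows "nbrs G a1 \<inter> nball G v (Suc k) = {a}"
proof -
  have ab: "a \<in> nball G v k" "b \<in> nball G v k" using sphere_k sphere_subset_nball by blast+
  have "a1 \<in> nbrs G a" "b1 \<in> nbrs G b" using nbrs_a nbrs_b by simp_all
  then have a1_a: "adj G a1 a" "adj G b1 b" "a1 \<in> verts G" "b1 \<in> verts G"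
    using wf_graph_adj_sym[OF wf] wf_graph_adjD[OF wf] by blast+
  have ball_k: "nball G v k = nball G v (k - 1) \<union> {a, b}"
    using nball_Suc_eq[of G v "k - 1"] k sphere_k by simp
  have ball_Suc: "nball G v (Suc k) = nball G v k \<union> {a1, b1}"
    using nball_Suc_eq sphere_Suc by simp
  have only_a: "w = a" if w: "adj G a1 w" "w \<in> nball G v (Suc k)" for w
  proof -
    have "w \<notin> nball G v (k - 1)"
    proof
      assume "w \<in> nball G v (k - 1)"
      then have "a1 \<in> nball G v (Suc (k - 1))"
        using nball_adj[OF wf _ wf_graph_adj_sym[OF wf w(1)]] by blast
      then show False using outer(1) k by simp
    qed
    moreover have "w \<noteq> b"
    proof
      assume "w = b"
      then have "a1 \<in> nbrs G b" using w(1) wf_graph_adj_sym[OF wf] by auto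
      then show False using nbrs_b inner(2) outer \<open>a1 \<noteq> b1\<close> by auto
    qed
    moreover have "w \<noteq> a1" using w(1) wf_graph_adj_irrefl[OF wf] by auto
    moreover have "w \<noteq> b1"
    proof
      assume "w = b1"
      then have "adj G a1 b1" "adj G b1 a1" using w(1) wf_graph_adj_sym[OF wf] by auto
      moreover have "a \<noteq> b1" "b \<noteq> a1" using ab outer by auto
      ultimately have "nbrs G a1 = {a, b1}" "nbrs G b1 = {b, a1}"
        using nbrs_eq_pair[OF a1_a(3) a1_a(1)] nbrs_eq_pair[OF a1_a(4) a1_a(2)] by simp_all
      then have "nbrs G x \<subseteq> nball G v (Suc k)" if "x \<in> sphere G v (Suc k)" for x
        using that sphere_Suc ball_Suc ab by auto
      then have "sphere G v (Suc (Suc k)) = {}" by (rule sphere_Suc_Suc_empty[OF wf])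
      then show False using not_closed by simp
    qed
    moreover have "w \<in> nball G v (k - 1) \<union> {a, b, a1, b1}" using w(2) ball_k ball_Suc by auto
    ultimately show "w = a" by simp
  qed
  moreover have "a \<in> nball G v (Suc k)" using ab nball_mono[of k "Suc k" G v] by auto
  ultimately show ?thesis using a1_a(1) by blast
qed

lemma two_ends_Suc:
  assumes k: "k \<ge> 1" and ends: "two_ends k" and not_closed: "sphere G v (Suc (Suc k)) \<noteq> {}"
  shows "two_ends (Suc k)"
proof -
  obtain a b a' b' where ab: "a \<noteq> b" "sphere G v k = {a, b}"
    and a': "nbrs G a \<inter> nball G v k = {a'}" and b': "nbrs G b \<inter> nball G v k = {b'}"
    using ends unfolding two_ends_def by blast
  have ab_ball: "a \<in> nball G v k" "b \<in> nball G v k"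
    using ab(2) sphere_subset_nball by blast+
  have "a \<in> verts G" "b \<in> verts G" using ab_ball nball_subset_verts by blast+
  moreover have "adj G a a'" "adj G b b'" "a' \<in> nball G v k" "b' \<in> nball G v k"
    using a' b' by auto
  ultimately obtain a1 b1 where a1: "a1 \<noteq> a'" "nbrs G a = {a', a1}"
    and b1: "b1 \<noteq> b'" "nbrs G b = {b', b1}"
    using other_nbr by metis
  have outer: "a1 \<notin> nball G v k" "b1 \<notin> nball G v k" using a' b' a1 b1 by auto
  have "sphere G v (Suc k) \<subseteq> {a1, b1}"
  proof
    fix y assume y: "y \<in> sphere G v (Suc k)"
    then obtain x where "x \<in> sphere G v k" "adj G x y" by (rule sphere_SucE[OF wf])
    then show "y \<in> {a1, b1}" using y ab(2) a1 b1 \<open>a' \<in> _\<close> \<open>b' \<in> _\<close> by (auto simp: sphere_Suc)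
  qed
  moreover have "a1 \<in> sphere G v (Suc k)" "b1 \<in> sphere G v (Suc k)"
    using nball_adj[OF wf] ab_ball a1 b1 outer by (auto simp: sphere_Suc)
  ultimately have sphere_Suc: "sphere G v (Suc k) = {a1, b1}" by blast
  have "a1 \<noteq> b1"
  proof
    assume "a1 = b1"
    then have "nbrs G a1 = {a, b}"
      using nbrs_eq_pair ab(1) a1(2) b1(2) wf_graph_adj_sym[OF wf] wf_graph_adjD[OF wf]
      by (metis insertI2 mem_Collect_eq singletonI)
    then have "nbrs G x \<subseteq> nball G v (Suc k)" if "x \<in> sphere G v (Suc k)" for x
      using that sphere_Suc \<open>a1 = b1\<close> ab_ball nball_mono[of k "Suc k" G v] by auto
    then have "sphere G v (Suc (Suc k)) = {}" by (rule sphere_Suc_Suc_empty[OF wf])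
    then show False using not_closed by simp
  qed
  have "nbrs G a1 \<inter> nball G v (Suc k) = {a}"
    by (rule new_end_nbrs[OF k ab(2) sphere_Suc \<open>a1 \<noteq> b1\<close> a1(2) b1(2)])
      (use a' b' outer not_closed in auto)
  moreover have "nbrs G b1 \<inter> nball G v (Suc k) = {b}"
    by (rule new_end_nbrs[OF k _ _ _ b1(2) a1(2)])
      (use ab(2) sphere_Suc \<open>a1 \<noteq> b1\<close> a' b' outer not_closed in \<open>auto simp: insert_commute\<close>)
  ultimately show ?thesis unfolding two_ends_def using \<open>a1 \<noteq> b1\<close> sphere_Suc by blast
qed

lemma two_ends_upto:
  assumes con: "connected_graph G" and not_covered: "\<not> verts G \<subseteq> nball G v R"
  shows "1 \<le> k \<Longrightarrow> k \<le> R \<Longrightarrow> two_ends k"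
proof (induction k rule: dec_induct)
  case base
  show ?case
    using two_ends_1 sphere_Suc_nonempty[OF wf con v not_covered, of 1] base
    by (simp add: numeral_2_eq_2)
next
  case (step k)
  then show ?case
    using two_ends_Suc sphere_Suc_nonempty[OF wf con v not_covered, of "Suc k"] by simp
qed

end

context path_extension
begin

lemma card_nbrs_H_z:
  assumes "card {u \<in> B. adj G z u} = 1"
  shows "card (nbrs H z) = 2"
proof -
  obtain u where u: "{u \<in> B. adj G z u} = {u}"
    using assms by (auto simp: card_1_singleton_iff)
  have "u \<in> {u \<in> B. adj G z u}" unfolding u by simp
  then have "u < K" using B_less by simp
  then show ?thesis unfolding nbrs_H_z u by simp
qed

lemma card_nbrs_H_end:
  assumes "e = Some q" "card {u \<in> B. adj G q u} = 1"
  shows "card (nbrs H q) = 2"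
proof -
  obtain u where u: "{u \<in> B. adj G q u} = {u}"
    using assms by (auto simp: card_1_singleton_iff)
  have "u \<in> {u \<in> B. adj G q u}" unfolding u by simp
  then have "u < K" using B_less by simp
  then show ?thesis unfolding nbrs_H_end[OF assms(1)] u using m by simp
qed

lemma card_nbrs_H_closed:
  assumes closed: "e = Some q"
    and ends: "card {u \<in> B. adj G z u} = 1" "card {u \<in> B. adj G q u} = 1"
    and inner: "\<And>y. y \<in> B \<Longrightarrow> y \<noteq> z \<Longrightarrow> y \<noteq> q \<Longrightarrow> nbrs G y \<subseteq> B \<and> card (nbrs G y) = 2"
    and x: "x \<in> verts H"
  shows "card (nbrs H x) = 2"
proof -
  have "q < K" "q \<noteq> z" using closed end_in_B end_not_z B_less by auto
  have "x \<in> B \<or> K \<le> x \<and> x < K + m" using x by auto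
  then consider "x = z" | "x = q" | "x \<in> B" "x \<noteq> z" "x \<noteq> q" | "K \<le> x" "x < K + m"
    by blast
  then show ?thesis
  proof cases
    case 1
    then show ?thesis using card_nbrs_H_z ends(1) by simp
  next
    case 2
    then show ?thesis using card_nbrs_H_end closed ends(2) by simp
  next
    case 3
    have "nbrs H x = {u \<in> B. adj G x u}" by (rule nbrs_H_inner) (use 3 closed in simp_all)
    also have "\<dots> = nbrs G x" using inner[OF 3] by blast
    finally show ?thesis using inner[OF 3] by simp
  next
    case 4
    then have "(if x = K then z else x - 1) \<noteq> (if Suc x < K + m then Suc x else q)"
      using \<open>q < K\<close> \<open>q \<noteq> z\<close> z_less by auto
    moreover have "nbrs H x = {if x = K then z else x - 1, if Suc x < K + m then Suc x else q}"
      using nbrs_H_path[OF 4] closed by simp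
    ultimately show ?thesis by simp
  qed
qed

end

lemma exists_cycle_extension:
  assumes G: "G \<in> cycle_graphs" and v: "v \<in> verts G" and R: "R \<ge> 1"
    and not_covered: "\<not> verts G \<subseteq> nball G v R" and M: "card (nball G v R) < M"
  shows "\<exists>H\<in>cycle_graphs. card (verts H) = M \<and> ball_agrees G H v R"
proof -
  have wf: "wf_graph G" and con: "connected_graph G"
    and deg2: "\<And>x. x \<in> verts G \<Longrightarrow> card (nbrs G x) = 2"
    using G by (auto simp: cycle_graphs_def is_cycle_graph_def degree_def)
  interpret two_regular G v using wf deg2 v by unfold_locales
  obtain p q p' q' where pq: "p \<noteq> q" "sphere G v R = {p, q}"
    and p': "nbrs G p \<inter> nball G v R = {p'}" and q': "nbrs G q \<inter> nball G v R = {q'}"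
    using two_ends_upto[OF con not_covered R order_refl] unfolding two_ends_def by blast
  define B where "B = nball G v R"
  have sphere_R: "sphere G v R = B - nball G v (R - 1)" using R by (simp add: sphere_def B_def)
  have pq_B: "p \<in> B" "q \<in> B" "p \<notin> nball G v (R - 1)" "q \<notin> nball G v (R - 1)"
    using pq(2) sphere_R by auto
  interpret path_extension G B "fresh_vertex G" "M - card B" p "Some q"
    using wf fresh_vertex_gt pq pq_B M by unfold_locales (auto simp: B_def nball_subset_verts)
  have agrees: "ball_agrees G H v R" using pq_B by (intro ball_agrees_H) (auto simp: B_def)
  have v_inner: "v \<in> nball G v (R - 1)" using v by (rule center_in_nball)
  have "{u \<in> B. adj G p u} = {p'}" "{u \<in> B. adj G q u} = {q'}" using p' q' by (auto simp: B_def)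
  moreover have "nbrs G y \<subseteq> B \<and> card (nbrs G y) = 2" if "y \<in> B" "y \<noteq> p" "y \<noteq> q" for y
  proof
    have "y \<in> nball G v (R - 1)" using that sphere_R pq(2) by auto
    then show "nbrs G y \<subseteq> B" using nball_adj[OF wf, of y v "R - 1"] R by (auto simp: B_def)
    show "card (nbrs G y) = 2" using that(1) nball_subset_verts[of G v R] deg2 unfolding B_def by blast
  qed
  ultimately have "card (nbrs H x) = 2" if "x \<in> verts H" for x
    using card_nbrs_H_closed[OF refl _ _ _ that] by simp
  moreover have "card (verts H) \<ge> 3"
  proof -
    have "v \<noteq> p" "v \<noteq> q" using v_inner pq_B by auto
    then have "card {v, p, q} = 3" using pq(1) by simp
    moreover have "{v, p, q} \<subseteq> verts H"
      using v_inner pq_B nball_mono[of "R - 1" R G v] by (auto simp: B_def)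
    ultimately show ?thesis using card_mono[OF wf_graph_finite[OF wf_H]] by metis
  qed
  ultimately have "H \<in> cycle_graphs"
    unfolding cycle_graphs_def is_cycle_graph_def degree_def
    using wf_H connected_H[OF B_def v agrees] by blast
  moreover have "card (verts H) = M" using card_H M by (simp add: B_def)
  ultimately show ?thesis using agrees by blast
qed

section \<open>Constant mending radius\<close>

lemma family_wf_max_degree:
  assumes fam: "F = bdeg_graphs \<Delta> \<or> F = bdeg_trees \<Delta> \<or> (F = cycle_graphs \<and> \<Delta> = 2)"
    and G: "G \<in> F"
  shows "wf_graph G" "max_degree_le G \<Delta>"
  using fam G
  by (auto simp: bdeg_graphs_def bdeg_trees_def cycle_graphs_def is_cycle_graph_def max_degree_le_def)

lemma exists_family_extension:
  assumes fam: "F = bdeg_graphs \<Delta> \<or> F = bdeg_trees \<Delta> \<or> (F = cycle_graphs \<and> \<Delta> = 2)"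
    and G: "G \<in> F" and v: "v \<in> verts G" and R: "R \<ge> 1"
    and not_covered: "\<not> verts G \<subseteq> nball G v R" and M: "card (nball G v R) < M"
  shows "\<exists>H\<in>F. card (verts H) = M \<and> ball_agrees G H v R"
proof -
  consider "F = bdeg_graphs \<Delta>" | "F = bdeg_trees \<Delta>" | "F = cycle_graphs" using fam by blast
  then show ?thesis
  proof cases
    case 1
    then show ?thesis using exists_graph_extension[of G \<Delta> v R M] G M by simp
  next
    case 2
    then show ?thesis using exists_tree_extension[of G \<Delta>, OF _ v R not_covered M] G by simp
  next
    case 3
    then show ?thesis using exists_cycle_extension[OF _ v R not_covered M] G by simp
  qed
qed

lemma le_ball_bound: "R \<le> ball_bound \<Delta> R"
proof (cases "\<Delta> \<le> 2")
  case False
  have "R < 2 ^ R" by (rule less_exp)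
  also have "(2::nat) ^ R \<le> (\<Delta> + 1) ^ R" using False by (intro power_mono) auto
  finally show ?thesis using False by (simp add: ball_bound_def)
qed (simp add: ball_bound_def)

lemma ball_bound_growth:
  "(\<lambda>R. if \<Delta> \<le> 2 then real (ball_bound \<Delta> R + 1) else ln (real (ball_bound \<Delta> R + 1)))
     \<in> O(\<lambda>R. real R)"
proof (rule bigoI[where c = "4 + ln (real \<Delta> + 1)"])
  show "\<forall>\<^sub>F R in at_top. norm (if \<Delta> \<le> 2 then real (ball_bound \<Delta> R + 1)
      else ln (real (ball_bound \<Delta> R + 1))) \<le> (4 + ln (real \<Delta> + 1)) * norm (real R)"
    using eventually_ge_at_top[of 1]
  proof eventually_elim
    case (elim R)
    have R1: "1 \<le> real R" using elim by simp
    have bound: "(4 + ln (real \<Delta> + 1)) * real R = 4 * real R + ln (real \<Delta> + 1) * real R"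
      by (simp add: distrib_right)
    have "0 \<le> ln (real \<Delta> + 1) * real R" by simp
    show ?case
    proof (cases "\<Delta> \<le> 2")
      case True
      then have "real (ball_bound \<Delta> R + 1) = 2 * real R + 2" by (simp add: ball_bound_def)
      moreover have "2 * real R + 2 \<le> (4 + ln (real \<Delta> + 1)) * real R"
        using bound R1 \<open>0 \<le> ln (real \<Delta> + 1) * real R\<close> by linarith
      ultimately show ?thesis using True by simp
    next
      case False
      have "1 \<le> (real \<Delta> + 1) ^ R" by simp
      then have "real (ball_bound \<Delta> R + 1) \<le> 2 * (real \<Delta> + 1) ^ R"
        using False by (simp add: ball_bound_def add.commute)
      then have "ln (real (ball_bound \<Delta> R + 1)) \<le> ln (2 * (real \<Delta> + 1) ^ R)" by simp
      also have "\<dots> = ln 2 + ln (real \<Delta> + 1) * real R" by (simp add: ln_mult ln_realpow)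
      also have "\<dots> \<le> (4 + ln (real \<Delta> + 1)) * real R"
        using bound R1 ln_2_less_1 by linarith
      finally show ?thesis using False by simp
    qed
  qed
qed

lemma exists_radius_above_mending_time:
  fixes T :: "nat \<Rightarrow> nat"
  assumes small: "(\<lambda>n. real (T n)) \<in> o(\<lambda>n. if \<Delta> \<le> 2 then real n else ln (real n))"
  shows "\<exists>R\<ge>1. T (ball_bound \<Delta> R + 1) + c \<le> R"
proof -
  define M where "M R = ball_bound \<Delta> R + 1" for R
  have "filterlim M at_top at_top"
    by (rule filterlim_at_top_mono[OF filterlim_ident])
      (simp add: M_def le_SucI[OF le_ball_bound])
  then have "(\<lambda>R. real (T (M R))) \<in> o(\<lambda>R. if \<Delta> \<le> 2 then real (M R) else ln (real (M R)))"
    by (rule landau_o.small.compose[OF small])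
  then have "(\<lambda>R. real (T (M R))) \<in> o(\<lambda>R. real R)"
    using ball_bound_growth unfolding M_def by (rule landau_o.small_big_trans)
  then have "\<forall>\<^sub>F R in at_top. norm (real (T (M R))) \<le> 1 / 2 * norm (real R)"
    by (rule landau_o.smallD) simp
  moreover have "\<forall>\<^sub>F R in at_top. max 1 (2 * c) \<le> R" by (rule eventually_ge_at_top)
  ultimately have "\<forall>\<^sub>F R in at_top. 1 \<le> R \<and> T (M R) + c \<le> R"
  proof eventually_elim
    case (elim R)
    then have "real (T (M R) + c) \<le> real R" by simp
    then show ?case using elim(2) by linarith
  qed
  then show ?thesis unfolding M_def eventually_at_top_linorder by auto
qed

lemma verifier_mendable_constant:
  assumes fam: "F = bdeg_graphs \<Delta> \<or> F = bdeg_trees \<Delta> \<or> (F = cycle_graphs \<and> \<Delta> = 2)"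
    and lv: "local_verifier F \<psi> r" and mend: "verifier_mendable F \<psi> r T"
    and R: "R \<ge> 1" and TR: "T (ball_bound \<Delta> R + 1) + 3 * r \<le> R"
  shows "verifier_mendable F \<psi> r (\<lambda>_. Max (T ` {..ball_bound \<Delta> R + 1}))"
  unfolding verifier_mendable_def
proof (intro ballI allI impI)
  fix G \<sigma> L v
  assume G: "G \<in> F" and acc: "relaxed_accepts \<psi> r G \<sigma> L" and v: "v \<in> verts G"
  let ?c = "Max (T ` {..ball_bound \<Delta> R + 1})"
  have T_le: "T n \<le> ?c" if "n \<le> ball_bound \<Delta> R + 1" for n
    using that by (intro Max_ge) auto
  have mend_at: "\<exists>\<mu>. is_mend \<psi> r H \<sigma> L' u (T (card (verts H))) \<mu>"
    if "H \<in> F" "relaxed_accepts \<psi> r H \<sigma> L'" "u \<in> verts H" for H L' u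
    using mend that unfolding verifier_mendable_def by blast
  have wf: "wf_graph G" and ball: "card (nball G v R) \<le> ball_bound \<Delta> R"
    using family_wf_max_degree[OF fam G] card_nball_le_ball_bound[OF _ _ v] by auto
  show "\<exists>\<mu>. is_mend \<psi> r G \<sigma> L v ?c \<mu>"
  proof (cases "verts G \<subseteq> nball G v R")
    case True
    then have "card (verts G) \<le> ball_bound \<Delta> R"
      using card_mono[OF finite_nball[OF wf] True] ball by linarith
    then have "T (card (verts G)) \<le> ?c" using T_le by simp
    moreover obtain \<mu> where "is_mend \<psi> r G \<sigma> L v (T (card (verts G))) \<mu>"
      using mend_at[OF G acc v] by blast
    ultimately show ?thesis using is_mend_mono by blast
  next
    case False
    then obtain H where H: "H \<in> F" "card (verts H) = ball_bound \<Delta> R + 1"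
      and agrees: "ball_agrees G H v R"
      using exists_family_extension[OF fam G v R False, of "ball_bound \<Delta> R + 1"] ball by auto
    have "v \<in> verts H" using agrees center_in_nball[OF v] unfolding ball_agrees_def by blast
    then obtain \<mu> where "is_mend \<psi> r G \<sigma> L v (T (ball_bound \<Delta> R + 1)) \<mu>"
      using mend_transplant[OF lv G H(1) wf v agrees TR acc] mend_at[OF H(1)] H(2) by metis
    then show ?thesis using is_mend_mono T_le by blast
  qed
qed

theorem theorem8p1:
  fixes \<Delta> :: nat
    and F :: "graph set"
    and \<psi>0 :: "('i::finite, 'o::finite) verifier"
    and r0 :: nat
    and T :: "nat \<Rightarrow> nat"
  assumes fam: "F = bdeg_graphs \<Delta> \<or> F = bdeg_trees \<Delta> \<or> (F = cycle_graphs \<and> \<Delta> = 2)"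
    and lcl: "local_verifier F \<psi>0 r0"
    and mend: "problem_mendable F \<psi>0 T"
    and small: "(\<lambda>n. real (T n)) \<in> o(\<lambda>n. if \<Delta> \<le> 2 then real n else ln (real n))"
  shows "\<exists>c. problem_mendable F \<psi>0 (\<lambda>_. c)"
proof -
  obtain r and \<psi> :: "('i, 'o) verifier" where lv: "local_verifier F \<psi> r"
    and same_solutions: "\<forall>G\<in>F. \<forall>\<sigma> L. is_solution \<psi> G \<sigma> L \<longleftrightarrow> is_solution \<psi>0 G \<sigma> L"
    and mendable: "verifier_mendable F \<psi> r T"
    using mend unfolding problem_mendable_def by blast
  obtain R where "R \<ge> 1" "T (ball_bound \<Delta> R + 1) + 3 * r \<le> R"
    using exists_radius_above_mending_time[OF small] by blast
  then have "verifier_mendable F \<psi> r (\<lambda>_. Max (T ` {..ball_bound \<Delta> R + 1}))"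
    by (rule verifier_mendable_constant[OF fam lv mendable])
  then show ?thesis using lv same_solutions unfolding problem_mendable_def by blast
qed

end
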